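(* Under the setting and Assumptions A1–A4 described in the context, let $\{\mathcal{X}^t\}$ be generated by the TNNR iteration, set $\delta_t=\mu^t\theta_1^t/2$ and $H_{\delta_{t+1}}(\mathcal{X}^{t+1},\mathcal{X}^t)=F(\mathcal{X}^{t+1})+\delta_{t+1}\|\mathcal{X}^{t+1}-\mathcal{X}^t\|^2$. Then (i) for all $t\ge 0$, $H_{\delta_{t+1}}(\mathcal{X}^{t+1},\mathcal{X}^t)-H_{\delta_t}(\mathcal{X}^t,\mathcal{X}^{t-1})\le-\frac{\varepsilon L_f}{2}\|\mathcal{X}^{t+1}-\mathcal{X}^t\|^2$; in particular the sequence $H_{\delta_{t+1}}(\mathcal{X}^{t+1},\mathcal{X}^t)$ is monotonically nonincreasing; (ii) $\lim_{t\to\infty}(\mathcal{X}^t-\mathcal{X}^{t+1})=0$.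
   Context: Tensors: fix positive integers $n_1,n_2,n_3$, let $r=\min\{n_1,n_2\}$. For $\mathcal{X}\in\mathbb{R}^{n_1\times n_2\times n_3}$, $\|\mathcal{X}\|$ is the Frobenius norm (square root of the sum of squared entries) and $\langle\cdot,\cdot\rangle$ the entrywise inner product. $\bar{\mathcal{X}}\in\mathbb{C}^{n_1\times n_2\times n_3}$ is the (unnormalized) discrete Fourier transform of $\mathcal{X}$ along the third mode, $\bar{\mathcal{X}}(i,j,:)=F_{n_3}\mathcal{X}(i,j,:)$ with $F_{n_3}$ the $n_3\times n_3$ DFT matrix $(\omega^{(p-1)(q-1)})_{p,q}$, $\omega=e^{-2\pi\sqrt{-1}/n_3}$; $\bar X^{(k)}$ is its $k$-th frontal slice, and $\sigma_i^k(\mathcal{X})$ denotes the $i$-th largest singular value of $\bar X^{(k)}$, $i\in[r]$, $k\in[n_3]$. Assumption A1: $\rho:[0,\infty)\to[0,\infty)$ is differentiable and concave, $\rho'$ is Lipschitz continuous with constant $L_g$, and $\rho'(t)>0$ for all $t\ge 0$. Assumption A2: $f:\mathbb{R}^{n_1\times n_2\times n_3}\to[0,\infty)$ is continuously differentiable and $\nabla f$ is $L_f$-Lipschitz ($L_f>0$). Objective: for $\lambda>0$, $F(\mathcal{X})=\lambda\sum_{k=1}^{n_3}\rho\Big(\sum_{i=1}^r\rho\big(\rho(\sigma_i^k(\mathcal{X}))\big)\Big)+f(\mathcal{X})$. Assumption A3: $F$ is coercive ($F(\mathcal{X})\to+\infty$ as $\|\mathcal{X}\|\to\infty$) and bounded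 below. Weighted function: for weights $\alpha=(\alpha_k)_{k\in[n_3]}$, $\beta=(\beta_i^k)$, $\|\mathcal{X}\|_{\rho_\alpha^\beta}=\sum_{k=1}^{n_3}\sum_{i=1}^r\alpha_k\beta_i^k\rho(\sigma_i^k(\mathcal{X}))$. TNNR iteration: start from $\mathcal{X}^0$ and set $\mathcal{X}^{-1}=\mathcal{X}^0$; for every $t\ge 0$ the weights are $\alpha_k^t=\rho'\big(\sum_{i=1}^r\rho(\rho(\sigma_i^k(\mathcal{X}^t)))\big)$, $\beta_i^{k,t}=\rho'\big(\rho(\sigma_i^k(\mathcal{X}^t))\big)$, and $\mathcal{Y}^t=\mathcal{X}^t+\theta_1^t(\mathcal{X}^t-\mathcal{X}^{t-1})$, $\mathcal{Z}^t=\mathcal{X}^t+\theta_2^t(\mathcal{X}^t-\mathcal{X}^{t-1})$, $\mathcal{X}^{t+1}\in\arg\min_{\mathcal{X}}\ \lambda\|\mathcal{X}\|_{\rho_{\alpha^t}^{\beta^t}}+\langle\mathcal{X}-\mathcal{Y}^t,\nabla f(\mathcal{Z}^t)\rangle+\frac{\mu^t}{2}\|\mathcal{X}-\mathcal{Y}^t\|^2$ (a global minimizer). Assumption A4: for some fixed $\varepsilon\in(0,1)$ and all $t$: $\theta_1^t\in[0,(1-\varepsilon)/2)$, $\theta_2^t\in[0,1/2]$, $(\mu^t)$ is nonincreasing and $\mu^0\ge\mu^t\ge\max\{\theta_2^tL_f/\theta_1^t,\ (1-\theta_2^t)L_f/(1-\theta_1^t-\theta_1^{t+1}-\varepsilon)\}$.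 *)

theory Defs
  imports "HOL-Analysis.Analysis"
begin

text \<open>Tensors in R^(n1 x n2 x n3) are elements of real^'c^'b^'a (n1 = CARD('a), n2 = CARD('b),
 n3 = CARD('c)); entry (i,j,k) is X$i$j$k.  The Euclidean norm / inner product of this type are
 exactly the Frobenius norm / entrywise inner product.  The linear order on each (finite) index
 type fixes the numbering 1..n of that mode (tidx gives the 0-based position).\<close>

type_synonym ('a, 'b, 'c) tensor = "(((real, 'c) vec, 'b) vec, 'a) vec"
type_synonym ('a, 'b) cmat = "((complex, 'b) vec, 'a) vec"

definition tidx :: "'c::{finite,linorder} \<Rightarrow> nat" where
  "tidx c = card {d. d < c}"

definition cadj :: "('a::finite, 'b::finite) cmat \<Rightarrow> ('b, 'a) cmat" where
  "cadj A = (\<chi> j i. cnj (A$i$j))"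

definition unitary :: "('a::finite, 'a) cmat \<Rightarrow> bool" where
  "unitary U \<longleftrightarrow> U ** cadj U = mat 1 \<and> cadj U ** U = mat 1"

text \<open>Singular values of an n1 x n2 complex matrix (0-based index, sorted nonincreasingly,
 set to zero beyond min(n1,n2)), defined through the singular value decomposition
 A = U diag(s) V^H with U, V unitary.\<close>
definition is_svals :: "('a::{finite,linorder}, 'b::{finite,linorder}) cmat \<Rightarrow> (nat \<Rightarrow> real) \<Rightarrow> bool" where
  "is_svals A s \<longleftrightarrow>
     (\<forall>i. min (card (UNIV::'a set)) (card (UNIV::'b set)) \<le> i \<longrightarrow> s i = 0) \<and>
     (\<forall>i. 0 \<le> s i) \<and> (\<forall>i j. i \<le> j \<longrightarrow> s j \<le> s i) \<and>
     (\<exists>(U::('a,'a) cmat) (V::('b,'b) cmat). unitary U \<and> unitary V \<and>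
        A = U ** (\<chi> i j. if tidx i = tidx j then complex_of_real (s (tidx i)) else 0) ** cadj V)"

definition svals :: "('a::{finite,linorder}, 'b::{finite,linorder}) cmat \<Rightarrow> nat \<Rightarrow> real" where
  "svals A = (THE s. is_svals A s)"

text \<open>Unnormalized DFT along the third mode; k-th frontal slice of the transformed tensor,
 with DFT matrix entries omega^((p-1)(q-1)), omega = exp(-2 pi i / n3).\<close>
definition dft_omega :: "nat \<Rightarrow> complex" where
  "dft_omega n = exp (- 2 * of_real pi * \<i> / of_nat n)"

definition dft_slice :: "('a::finite, 'b::finite, 'c::{finite,linorder}) tensor \<Rightarrow> 'c \<Rightarrow> ('a, 'b) cmat" where
  "dft_slice X k = (\<chi> i j. \<Sum>q\<in>UNIV. dft_omega (card (UNIV::'c set)) ^ (tidx k * tidx q) * complex_of_real (X$i$j$q))"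

text \<open>tsigma X k i = (i+1)-th largest singular value of the k-th frontal slice of bar X.\<close>
definition tsigma :: "('a::{finite,linorder}, 'b::{finite,linorder}, 'c::{finite,linorder}) tensor \<Rightarrow> 'c \<Rightarrow> nat \<Rightarrow> real" where
  "tsigma X k i = svals (dft_slice X k) i"

definition objF :: "(real \<Rightarrow> real) \<Rightarrow> real \<Rightarrow> (('a, 'b, 'c) tensor \<Rightarrow> real) \<Rightarrow>
    ('a::{finite,linorder}, 'b::{finite,linorder}, 'c::{finite,linorder}) tensor \<Rightarrow> real" where
  "objF \<rho> lam f X = lam * (\<Sum>k\<in>UNIV. \<rho> (\<Sum>i<min (card (UNIV::'a set)) (card (UNIV::'b set)). \<rho> (\<rho> (tsigma X k i)))) + f X"

definition wfun :: "(real \<Rightarrow> real) \<Rightarrow> ('c \<Rightarrow> real) \<Rightarrow> ('c \<Rightarrow> nat \<Rightarrow> real) \<Rightarrow>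
    ('a::{finite,linorder}, 'b::{finite,linorder}, 'c::{finite,linorder}) tensor \<Rightarrow> real" where
  "wfun \<rho> \<alpha> \<beta> X = (\<Sum>k\<in>UNIV. \<Sum>i<min (card (UNIV::'a set)) (card (UNIV::'b set)). \<alpha> k * \<beta> k i * \<rho> (tsigma X k i))"

end

theory Submission
  imports Defs "HOL-Computational_Algebra.Polynomial"
begin

(* By concavity, \<rho> lies below its tangents on [0, \<infinity>); applied twice (the outer tangent with a
   nonnegative slope) this shows that, up to a constant, the weighted function with the weights of
   X^t majorizes the nonsmooth part of F.  Comparing X^(t+1) with X^t in the subproblem and bounding
   f from above and below by the quadratic models of an L_f-smooth function around Z^t gives a
   three-point inequality; the conditions A4 absorb the cross term <X^(t+1) - X^t, X^t - X^(t-1)>,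
   so H drops by at least \<epsilon> L_f/2 |X^(t+1) - X^t|^2.  Since H is bounded below, the squared steps
   are summable and tend to zero.

   The tangent bounds are used at singular values, which must therefore be nonnegative.  As the
   singular values are given by a definite description, this requires an SVD to exist (it is built
   variationally: each singular pair maximizes Re <x, A y> over unit vectors orthogonal to the
   previous ones) and the singular values to be unique (their squares are the roots of the
   characteristic polynomial of A A^H). *)

section \<open>Complex inner product and orthonormal sequences\<close>

definition cinner :: "complex^'n \<Rightarrow> complex^'n \<Rightarrow> complex" where
  "cinner x y = (\<Sum>i\<in>UNIV. cnj (x$i) * y$i)"

lemma cinner_add_right: "cinner x (y + z) = cinner x y + cinner x z"
  by (simp add: cinner_def distrib_left sum.distrib)

lemma cinner_diff_right: "cinner x (y - z) = cinner x y - cinner x z"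
  by (simp add: cinner_def right_diff_distrib sum_subtractf)

lemma cinner_scale_right: "cinner x (c *s y) = c * cinner x y"
  by (simp add: cinner_def sum_distrib_left algebra_simps)

lemma cinner_scale_left: "cinner (c *s x) y = cnj c * cinner x y"
  by (simp add: cinner_def sum_distrib_left algebra_simps)

lemma cinner_zero_right [simp]: "cinner x 0 = 0"
  by (simp add: cinner_def)

lemma cinner_sum_right: "cinner x (\<Sum>i\<in>S. f i) = (\<Sum>i\<in>S. cinner x (f i))"
  by (induction S rule: infinite_finite_induct) (simp_all add: cinner_add_right)

lemma cinner_commute: "cinner y x = cnj (cinner x y)"
  by (simp add: cinner_def mult.commute)

lemma scaleR_eq_vector_scalar_mult: "c *\<^sub>R x = complex_of_real c *s x" for x :: "complex^'n"
  unfolding scaleR_vec_def vector_scalar_mult_def by (simp add: scaleR_conv_of_real)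

lemma Re_cinner: "Re (cinner x y) = x \<bullet> y"
  by (simp add: cinner_def inner_vec_def inner_complex_def Re_sum)

lemma cinner_self: "cinner x x = complex_of_real ((norm x)\<^sup>2)"
proof -
  have "Im (cinner x x) = 0" by (simp add: cinner_def Im_sum algebra_simps)
  moreover have "Re (cinner x x) = (norm x)\<^sup>2" by (simp add: Re_cinner power2_norm_eq_inner)
  ultimately show ?thesis by (simp add: complex_eq_iff)
qed

lemma cinner_mult_vec: "cinner x (A *v y) = cinner (cadj A *v x) y"
proof -
  have "cinner x (A *v y) = (\<Sum>i\<in>UNIV. \<Sum>j\<in>UNIV. cnj (x$i) * A$i$j * y$j)"
    by (simp add: cinner_def matrix_vector_mult_def sum_distrib_left mult.assoc)
  also have "\<dots> = (\<Sum>j\<in>UNIV. \<Sum>i\<in>UNIV. cnj (x$i) * A$i$j * y$j)" by (rule sum.swap)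
  also have "\<dots> = cinner (cadj A *v x) y"
    unfolding cinner_def matrix_vector_mult_def cadj_def
    by (simp add: sum_distrib_right sum_distrib_left ac_simps)
  finally show ?thesis .
qed

lemma inner_cadj_mult_vec: "y \<bullet> (cadj A *v x) = x \<bullet> (A *v y)"
  by (metis Re_cinner cinner_mult_vec inner_commute)

lemma cadj_cadj [simp]: "cadj (cadj A) = A"
  by (simp add: cadj_def vec_eq_iff)

lemma cadj_mult: "cadj (A ** B) = cadj B ** cadj A"
  by (simp add: cadj_def vec_eq_iff matrix_matrix_mult_def mult.commute)

lemma unit_vector_eq_scaleR:
  fixes x w :: "'v::real_inner"
  assumes x: "norm x = 1" and le: "norm w \<le> x \<bullet> w"
  shows "w = (x \<bullet> w) *\<^sub>R x"
proof -
  have "(norm w)\<^sup>2 \<le> (x \<bullet> w)\<^sup>2" using le by (simp add: power_mono)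
  moreover have "x \<bullet> x = 1" using x by (simp add: norm_eq_1)
  then have "(norm (w - (x \<bullet> w) *\<^sub>R x))\<^sup>2 = (norm w)\<^sup>2 - (x \<bullet> w)\<^sup>2"
    unfolding power2_norm_eq_inner
    by (simp add: inner_diff_left inner_diff_right inner_commute power2_eq_square algebra_simps)
  ultimately have "(norm (w - (x \<bullet> w) *\<^sub>R x))\<^sup>2 \<le> 0" by linarith
  then show ?thesis by simp
qed

definition orthonormal_seq :: "nat \<Rightarrow> (nat \<Rightarrow> complex^'n) \<Rightarrow> bool" where
  "orthonormal_seq k w \<longleftrightarrow> (\<forall>i<k. \<forall>j<k. cinner (w i) (w j) = (if i = j then 1 else 0))"

definition orth_sphere :: "(nat \<Rightarrow> complex^'n) \<Rightarrow> nat \<Rightarrow> (complex^'n) set" where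
  "orth_sphere w k = {x. norm x = 1 \<and> (\<forall>j<k. cinner (w j) x = 0)}"

lemma compact_orth_sphere: "compact (orth_sphere (w :: nat \<Rightarrow> complex^'n) k)"
proof -
  have "orth_sphere w k = {x. norm x = 1} \<inter> (\<Inter>j<k. {x. cinner (w j) x = 0})"
    by (auto simp: orth_sphere_def)
  moreover have "closed {x::complex^'n. cinner (w j) x = 0}" for j
    unfolding cinner_def by (rule closed_Collect_eq) (intro continuous_intros)+
  moreover have "closed {x::complex^'n. norm x = 1}"
    by (rule closed_Collect_eq) (intro continuous_intros)+
  moreover have "bounded (orth_sphere w k)"
    by (rule bounded_subset[OF bounded_cball[of 0 1]]) (auto simp: orth_sphere_def)
  ultimately show ?thesis by (metis compact_eq_bounded_closed closed_INT closed_Int)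
qed

lemma normalize_in_orth_sphere:
  "y \<noteq> 0 \<Longrightarrow> (\<forall>j<k. cinner (w j) y = 0) \<Longrightarrow> (1 / norm y) *\<^sub>R y \<in> orth_sphere w k"
  by (auto simp: orth_sphere_def) (simp add: scaleR_eq_vector_scalar_mult cinner_scale_right)

lemma orthonormal_seq_norm:
  assumes "orthonormal_seq k w" "i < k"
  shows "norm (w i) = 1"
proof -
  have "cinner (w i) (w i) = 1" using assms unfolding orthonormal_seq_def by simp
  then have "complex_of_real ((norm (w i))\<^sup>2) = 1" by (simp only: cinner_self)
  then have "(norm (w i))\<^sup>2 = 1\<^sup>2" by (simp only: of_real_eq_1_iff power_one)
  then show ?thesis by (simp only: power2_eq_iff_nonneg norm_ge_zero zero_le_one)
qed

lemma orthonormal_seq_in_orth_sphere: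
  assumes w: "orthonormal_seq k w" and ij: "i \<le> j" and jk: "j < k"
  shows "w j \<in> orth_sphere w i"
proof -
  have "cinner (w l) (w j) = 0" if "l < i" for l
  proof -
    have "l < k" "l \<noteq> j" using that ij jk by linarith+
    then show ?thesis using w jk unfolding orthonormal_seq_def by simp
  qed
  then show ?thesis using orthonormal_seq_norm[OF w jk] by (simp add: orth_sphere_def)
qed

lemma orth_sphere_nonempty:
  fixes w :: "nat \<Rightarrow> complex^'n"
  assumes ow: "orthonormal_seq k w" and k: "k < CARD('n)"
  shows "orth_sphere w k \<noteq> {}"
proof -
  define P where "P x = x - (\<Sum>i<k. cinner (w i) x *s w i)" for x
  have "\<exists>x. P x \<noteq> 0"
  proof (rule ccontr)
    assume "\<not> (\<exists>x. P x \<noteq> 0)"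
    then have "x = (\<Sum>i<k. cinner (w i) x *s w i)" for x
      by (simp add: P_def)
    then have "UNIV \<subseteq> vec.span (w ` {..<k})"
      by (metis (no_types, lifting) image_eqI lessThan_iff subsetI vec.span_base vec.span_scale vec.span_sum)
    then have "vec.dim (UNIV::(complex^'n) set) \<le> card (w ` {..<k})"
      by (rule vec.dim_le_card) simp
    also have "\<dots> \<le> k" using card_image_le[of "{..<k}" w] by simp
    finally show False using k by (simp add: card_cart_basis)
  qed
  then obtain x where x: "P x \<noteq> 0" by blast
  have "cinner (w j) (P x) = 0" if j: "j < k" for j
  proof -
    have "(\<Sum>i<k. cinner (w i) x * cinner (w j) (w i)) = (\<Sum>i<k. if i = j then cinner (w i) x else 0)"
      by (rule sum.cong) (use ow j in \<open>auto simp: orthonormal_seq_def\<close>)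
    then show ?thesis
      using j by (simp add: P_def cinner_diff_right cinner_sum_right cinner_scale_right)
  qed
  then show ?thesis using normalize_in_orth_sphere[OF x] by blast
qed

lemma orthonormal_seq_Suc:
  assumes "orthonormal_seq k w" "x \<in> orth_sphere w k"
  shows "orthonormal_seq (Suc k) (w(k := x))"
  unfolding orthonormal_seq_def
proof (intro allI impI)
  fix i j assume i: "i < Suc k" and j: "j < Suc k"
  have x: "norm x = 1" "\<forall>j<k. cinner (w j) x = 0" using assms(2) by (auto simp: orth_sphere_def)
  show "cinner ((w(k := x)) i) ((w(k := x)) j) = (if i = j then 1 else 0)"
    using assms(1) i j x cinner_commute[of x "w j"] cinner_self[of x]
    by (cases "i = k"; cases "j = k") (auto simp: orthonormal_seq_def)
qed

lemma orthonormal_seq_extend: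
  fixes w :: "nat \<Rightarrow> complex^'n"
  shows "orthonormal_seq k w \<Longrightarrow> k \<le> CARD('n) \<Longrightarrow>
    \<exists>w'. orthonormal_seq CARD('n) w' \<and> (\<forall>i<k. w' i = w i)"
proof (induction "CARD('n) - k" arbitrary: k w)
  case 0
  then show ?case by (metis diff_is_0_eq le_antisym)
next
  case (Suc d)
  then have k: "k < CARD('n)" by simp
  obtain x where x: "x \<in> orth_sphere w k" using orth_sphere_nonempty[OF Suc.prems(1) k] by blast
  have "d = CARD('n) - Suc k" using Suc.hyps(2) by arith
  from Suc.hyps(1)[OF this orthonormal_seq_Suc[OF Suc.prems(1) x]] k
  obtain w' where "orthonormal_seq CARD('n) w'" "\<forall>i<Suc k. w' i = (w(k := x)) i" by auto
  then show ?case by auto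
qed

lemma tidx_less: "tidx (c::'c::{finite,linorder}) < CARD('c)"
  unfolding tidx_def by (rule psubset_card_mono) auto

lemma tidx_mono: "(c::'c::{finite,linorder}) < c' \<Longrightarrow> tidx c < tidx c'"
  unfolding tidx_def by (rule psubset_card_mono) auto

lemma tidx_eq_iff [simp]: "tidx (c::'c::{finite,linorder}) = tidx c' \<longleftrightarrow> c = c'"
  by (metis less_irrefl linorder_neqE tidx_mono)

lemma bij_tidx: "bij_betw (tidx :: 'c::{finite,linorder} \<Rightarrow> nat) UNIV {..<CARD('c)}"
proof -
  have inj: "inj (tidx :: 'c \<Rightarrow> nat)" by (simp add: inj_def)
  have "tidx ` (UNIV::'c set) = {..<CARD('c)}"
    using tidx_less card_image[OF inj] by (intro card_subset_eq) auto
  then show ?thesis using inj by (simp add: bij_betw_def)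
qed

lemma tidx_inv: "l < CARD('c::{finite,linorder}) \<Longrightarrow> tidx (inv tidx l :: 'c) = l"
  using bij_tidx[where 'c='c] by (metis bij_betw_inv_into_right lessThan_iff)

lemma sum_tidx_eq:
  fixes g :: "'c::{finite,linorder} \<Rightarrow> 'v::comm_monoid_add"
  shows "(\<Sum>i\<in>UNIV. if tidx i = l then g i else 0) = (if l < CARD('c) then g (inv tidx l) else 0)"
proof (cases "l < CARD('c)")
  case True
  then have "(\<Sum>i\<in>UNIV. if tidx i = l then g i else 0) = (\<Sum>i\<in>UNIV. if i = inv tidx l then g i else 0)"
    by (metis tidx_eq_iff tidx_inv[OF True])
  then show ?thesis using True by simp
next
  case False
  then have "tidx i \<noteq> l" for i :: 'c using tidx_less[of i] by auto
  then show ?thesis using False by simp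
qed

section \<open>Existence and uniqueness of singular values\<close>

definition partial_svd ::
  "('a::finite, 'b::finite) cmat \<Rightarrow> nat \<Rightarrow> (nat \<Rightarrow> real) \<Rightarrow> (nat \<Rightarrow> complex^'a) \<Rightarrow> (nat \<Rightarrow> complex^'b) \<Rightarrow> bool"
where
  "partial_svd A k s u v \<longleftrightarrow> orthonormal_seq k u \<and> orthonormal_seq k v \<and>
     (\<forall>i<k. 0 \<le> s i \<and> A *v v i = complex_of_real (s i) *s u i \<and> cadj A *v u i = complex_of_real (s i) *s v i) \<and>
     (\<forall>i<k. \<forall>x\<in>orth_sphere u i. \<forall>y\<in>orth_sphere v i. x \<bullet> (A *v y) \<le> s i)"

lemma maximizer_eq_singular_vector:
  fixes A :: "('a::finite, 'b::finite) cmat"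
  assumes x0: "x0 \<in> orth_sphere u k"
    and max: "\<And>x. x \<in> orth_sphere u k \<Longrightarrow> x \<bullet> (A *v y0) \<le> x0 \<bullet> (A *v y0)"
    and y0: "\<And>j. j < k \<Longrightarrow> cinner (v j) y0 = 0"
    and pairs: "\<And>j. j < k \<Longrightarrow> cadj A *v u j = complex_of_real (s j) *s v j"
  shows "A *v y0 = (x0 \<bullet> (A *v y0)) *\<^sub>R x0" and "0 \<le> x0 \<bullet> (A *v y0)"
proof -
  define w where "w = A *v y0"
  have "norm w \<le> x0 \<bullet> w"
  proof (cases "w = 0")
    case False
    have "cinner (u j) w = 0" if "j < k" for j
      using pairs[OF that] y0[OF that] by (simp add: w_def cinner_mult_vec cinner_scale_left)
    then have "(1 / norm w) *\<^sub>R w \<in> orth_sphere u k"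
      using False by (simp add: normalize_in_orth_sphere)
    from max[OF this] show ?thesis
      using False by (simp add: w_def[symmetric] power2_norm_eq_inner[symmetric] power2_eq_square)
  qed simp
  moreover have "norm x0 = 1" using x0 by (simp add: orth_sphere_def)
  ultimately show "A *v y0 = (x0 \<bullet> (A *v y0)) *\<^sub>R x0" "0 \<le> x0 \<bullet> (A *v y0)"
    unfolding w_def[symmetric] by (auto intro: unit_vector_eq_scaleR order_trans[OF norm_ge_zero])
qed

lemma partial_svd_Suc:
  fixes A :: "('a::finite, 'b::finite) cmat"
  assumes svd: "partial_svd A k s u v" and ka: "k < CARD('a)" and kb: "k < CARD('b)"
  shows "\<exists>s0 x0 y0. partial_svd A (Suc k) (s(k := s0)) (u(k := x0)) (v(k := y0))"
proof -
  let ?S = "orth_sphere u k \<times> orth_sphere v k"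
  note svd' = svd[unfolded partial_svd_def]
  have ou: "orthonormal_seq k u" and ov: "orthonormal_seq k v"
    using svd' by simp_all
  have pairs: "\<And>i. i < k \<Longrightarrow> 0 \<le> s i \<and> A *v v i = complex_of_real (s i) *s u i
      \<and> cadj A *v u i = complex_of_real (s i) *s v i"
    using svd'[THEN conjunct2, THEN conjunct2, THEN conjunct1] by blast
  have bounds: "\<And>i x y. i < k \<Longrightarrow> x \<in> orth_sphere u i \<Longrightarrow> y \<in> orth_sphere v i \<Longrightarrow> x \<bullet> (A *v y) \<le> s i"
    using svd'[THEN conjunct2, THEN conjunct2, THEN conjunct2] by blast
  have "continuous_on ?S (\<lambda>p. A *v snd p)"
    using continuous_on_compose[OF continuous_on_snd[OF continuous_on_id] matrix_vector_mult_linear_continuous_on[of _ A]]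
    by (simp add: o_def)
  then have "continuous_on ?S (\<lambda>p. fst p \<bullet> (A *v snd p))"
    by (rule continuous_on_inner[OF continuous_on_fst[OF continuous_on_id]])
  moreover have "?S \<noteq> {}" using orth_sphere_nonempty[OF ou ka] orth_sphere_nonempty[OF ov kb] by simp
  ultimately obtain p where p: "p \<in> ?S" and pmax: "\<forall>q\<in>?S. fst q \<bullet> (A *v snd q) \<le> fst p \<bullet> (A *v snd p)"
    using continuous_attains_sup[OF compact_Times[OF compact_orth_sphere compact_orth_sphere]] by blast
  obtain x0 y0 where p_eq: "p = (x0, y0)" by (cases p)
  have x0: "x0 \<in> orth_sphere u k" and y0: "y0 \<in> orth_sphere v k" using p p_eq by simp_all
  have max: "\<And>x y. x \<in> orth_sphere u k \<Longrightarrow> y \<in> orth_sphere v k \<Longrightarrow> x \<bullet> (A *v y) \<le> x0 \<bullet> (A *v y0)"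
    using pmax p_eq by fastforce
  define s0 where "s0 = x0 \<bullet> (A *v y0)"
  have y0_orth: "\<And>j. j < k \<Longrightarrow> cinner (v j) y0 = 0"
    and x0_orth: "\<And>j. j < k \<Longrightarrow> cinner (u j) x0 = 0"
    using x0 y0 by (simp_all add: orth_sphere_def)
  have "\<And>j. j < k \<Longrightarrow> cadj A *v u j = complex_of_real (s j) *s v j" using pairs by blast
  from maximizer_eq_singular_vector[OF x0 max[OF _ y0] y0_orth this]
  have Ay0: "A *v y0 = s0 *\<^sub>R x0" and s0: "0 \<le> s0" unfolding s0_def by blast+
  have "cadj A *v x0 = (y0 \<bullet> (cadj A *v x0)) *\<^sub>R y0"
  proof (rule maximizer_eq_singular_vector(1)[OF y0])
    show "\<And>y. y \<in> orth_sphere v k \<Longrightarrow> y \<bullet> (cadj A *v x0) \<le> y0 \<bullet> (cadj A *v x0)"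
      using max[OF x0] by (simp add: inner_cadj_mult_vec)
    show "\<And>j. j < k \<Longrightarrow> cinner (u j) x0 = 0" by (rule x0_orth)
    show "\<And>j. j < k \<Longrightarrow> cadj (cadj A) *v v j = complex_of_real (s j) *s u j" using pairs by simp
  qed
  then have Ax0: "cadj A *v x0 = s0 *\<^sub>R y0" by (simp add: inner_cadj_mult_vec s0_def)
  show ?thesis
    unfolding partial_svd_def
  proof (intro exI conjI allI impI ballI)
    show "orthonormal_seq (Suc k) (u(k := x0))" "orthonormal_seq (Suc k) (v(k := y0))"
      using orthonormal_seq_Suc ou ov x0 y0 by blast+
  next
    fix i assume "i < Suc k"
    then consider "i < k" | "i = k" by linarith
    then show "0 \<le> (s(k := s0)) i"
      and "A *v (v(k := y0)) i = complex_of_real ((s(k := s0)) i) *s (u(k := x0)) i"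
      and "cadj A *v (u(k := x0)) i = complex_of_real ((s(k := s0)) i) *s (v(k := y0)) i"
      by (cases; simp add: pairs s0 Ay0 Ax0 scaleR_eq_vector_scalar_mult)+
  next
    fix i x y assume "i < Suc k"
      and x: "x \<in> orth_sphere (u(k := x0)) i" and y: "y \<in> orth_sphere (v(k := y0)) i"
    then have x': "x \<in> orth_sphere u i" and y': "y \<in> orth_sphere v i" by (auto simp: orth_sphere_def)
    consider "i < k" | "i = k" using \<open>i < Suc k\<close> by linarith
    then show "x \<bullet> (A *v y) \<le> (s(k := s0)) i"
    proof cases
      case 1
      then show ?thesis using bounds[OF 1 x' y'] by simp
    next
      case 2
      then show ?thesis using max x' y' by (simp add: s0_def)
    qed
  qed
qed

lemma partial_svd_exists:
  "k \<le> min CARD('a) CARD('b) \<Longrightarrow> \<exists>s u v. partial_svd (A :: ('a::finite, 'b::finite) cmat) k s u v"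
proof (induction k)
  case 0
  show ?case by (auto simp: partial_svd_def orthonormal_seq_def)
next
  case (Suc k)
  then show ?case using partial_svd_Suc[of A k] by fastforce
qed

lemma partial_svd_nonincreasing:
  assumes svd: "partial_svd A k s u v" and ij: "i \<le> j" and jk: "j < k"
  shows "s j \<le> s i"
proof -
  have "u j \<bullet> (A *v v j) = Re (cinner (u j) (complex_of_real (s j) *s u j))"
    using svd jk by (simp add: partial_svd_def Re_cinner)
  also have "\<dots> = s j" using svd jk by (simp add: partial_svd_def cinner_scale_right orthonormal_seq_def)
  finally have "s j = u j \<bullet> (A *v v j)" by simp
  also have "\<dots> \<le> s i"
  proof -
    have "\<forall>x\<in>orth_sphere u i. \<forall>y\<in>orth_sphere v i. x \<bullet> (A *v y) \<le> s i"
      using svd ij jk by (simp add: partial_svd_def)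
    moreover have "orthonormal_seq k u" "orthonormal_seq k v" using svd by (simp_all add: partial_svd_def)
    then have "u j \<in> orth_sphere u i" "v j \<in> orth_sphere v i"
      using ij jk by (simp_all add: orthonormal_seq_in_orth_sphere)
    ultimately show ?thesis by blast
  qed
  finally show ?thesis .
qed

definition col_mat :: "(nat \<Rightarrow> complex^'n::{finite,linorder}) \<Rightarrow> ('n, 'n) cmat" where
  "col_mat w = (\<chi> p i. w (tidx i) $ p)"

lemma cadj_col_mat_mult_vec: "cadj (col_mat w) *v x = (\<chi> i. cinner (w (tidx i)) x)"
  by (simp add: vec_eq_iff cadj_def matrix_vector_mult_def cinner_def col_mat_def)

lemma unitary_col_mat:
  fixes w :: "nat \<Rightarrow> complex^'n::{finite,linorder}"
  assumes "orthonormal_seq CARD('n) w"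
  shows "unitary (col_mat w)"
proof -
  have "(cadj (col_mat w) ** col_mat w) $ i $ j = mat 1 $ i $ j" for i j
  proof -
    have "(cadj (col_mat w) ** col_mat w) $ i $ j = cinner (w (tidx i)) (w (tidx j))"
      by (simp add: col_mat_def cadj_def matrix_matrix_mult_def cinner_def)
    then show ?thesis
      using assms tidx_less[of i] tidx_less[of j] by (simp add: orthonormal_seq_def mat_def)
  qed
  then have "cadj (col_mat w) ** col_mat w = mat 1" by (simp add: vec_eq_iff)
  then show ?thesis using matrix_left_right_inverse unitary_def by blast
qed

lemma orthonormal_basis_eq_0:
  fixes w :: "nat \<Rightarrow> complex^'n::{finite,linorder}"
  assumes w: "orthonormal_seq CARD('n) w" and x: "\<And>i. i < CARD('n) \<Longrightarrow> cinner (w i) x = 0"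
  shows "x = 0"
proof -
  have "cadj (col_mat w) *v x = 0"
    using x tidx_less[where 'c='n] by (simp add: cadj_col_mat_mult_vec vec_eq_iff)
  then have "col_mat w ** cadj (col_mat w) *v x = 0"
    by (simp flip: matrix_vector_mul_assoc)
  then show ?thesis using unitary_col_mat[OF w] by (simp add: unitary_def)
qed

definition rect_diag :: "(nat \<Rightarrow> real) \<Rightarrow> ('a::{finite,linorder}, 'b::{finite,linorder}) cmat" where
  "rect_diag s = (\<chi> i j. if tidx i = tidx j then complex_of_real (s (tidx i)) else 0)"

lemma col_mat_mult_rect_diag:
  fixes u :: "nat \<Rightarrow> complex^'a::{finite,linorder}" and j :: "'b::{finite,linorder}"
  shows "(col_mat u ** (rect_diag s :: ('a, 'b) cmat)) $ p $ j
    = (if tidx j < CARD('a) then complex_of_real (s (tidx j)) * u (tidx j) $ p else 0)"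
proof -
  have "(col_mat u ** (rect_diag s :: ('a, 'b) cmat)) $ p $ j
      = (\<Sum>i\<in>UNIV. if tidx (i::'a) = tidx j then complex_of_real (s (tidx j)) * u (tidx i) $ p else 0)"
    by (simp add: matrix_matrix_mult_def col_mat_def rect_diag_def if_distrib mult.commute cong: if_cong)
  also have "\<dots> = (if tidx j < CARD('a) then complex_of_real (s (tidx j)) * u (tidx j) $ p else 0)"
    by (simp add: sum_tidx_eq tidx_inv)
  finally show ?thesis .
qed

lemma mult_col_mat: "(A ** col_mat v) $ p $ j = (A *v v (tidx j)) $ p"
  by (simp add: matrix_matrix_mult_def matrix_vector_mult_def col_mat_def)

lemma svals_exist: "\<exists>s. is_svals (A :: ('a::{finite,linorder}, 'b::{finite,linorder}) cmat) s"
proof -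
  define r where "r = min CARD('a) CARD('b)"
  obtain s u v where svd: "partial_svd A r s u v" using partial_svd_exists[of r A] by (auto simp: r_def)
  have pairs: "\<And>i. i < r \<Longrightarrow> 0 \<le> s i \<and> A *v v i = complex_of_real (s i) *s u i
      \<and> cadj A *v u i = complex_of_real (s i) *s v i"
    using svd unfolding partial_svd_def by blast
  obtain uu where uu: "orthonormal_seq CARD('a) uu" "\<And>i. i < r \<Longrightarrow> uu i = u i"
    using svd orthonormal_seq_extend[of r u] by (auto simp: partial_svd_def r_def)
  obtain vv where vv: "orthonormal_seq CARD('b) vv" "\<And>i. i < r \<Longrightarrow> vv i = v i"
    using svd orthonormal_seq_extend[of r v] by (auto simp: partial_svd_def r_def)
  define sv where "sv i = (if i < r then s i else 0)" for i
  have col: "A *v vv l = (if l < CARD('a) then complex_of_real (sv l) *s uu l else 0)"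
    if l: "l < CARD('b)" for l
  proof (cases "l < r")
    case True
    then show ?thesis using pairs[OF True] uu(2)[OF True] vv(2)[OF True] by (simp add: sv_def r_def)
  next
    case False
    then have la: "\<not> l < CARD('a)" using l by (simp add: r_def)
    have "cinner (uu i) (A *v vv l) = 0" if i: "i < CARD('a)" for i
    proof -
      have ir: "i < r" and "i \<noteq> l" using i l la by (auto simp: r_def)
      then have "cinner (vv i) (vv l) = 0" using vv(1) i la l by (simp add: orthonormal_seq_def)
      then show ?thesis
        using pairs[OF ir] uu(2)[OF ir] vv(2)[OF ir] by (simp add: cinner_mult_vec cinner_scale_left)
    qed
    then show ?thesis using orthonormal_basis_eq_0[OF uu(1)] la by simp
  qed
  have "A ** col_mat vv = col_mat uu ** rect_diag sv"
    using col[OF tidx_less] by (simp add: vec_eq_iff mult_col_mat col_mat_mult_rect_diag)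
  then have "A = col_mat uu ** rect_diag sv ** cadj (col_mat vv)"
    using unitary_col_mat[OF vv(1)] unfolding unitary_def
    by (metis matrix_mul_assoc matrix_mul_rid)
  moreover have "sv j \<le> sv i" if "i \<le> j" for i j
    using partial_svd_nonincreasing[OF svd that] pairs that by (simp add: sv_def)
  ultimately have "is_svals A sv"
    using unitary_col_mat[OF uu(1)] unitary_col_mat[OF vv(1)] pairs
    unfolding is_svals_def rect_diag_def by (auto simp: sv_def r_def)
  then show ?thesis by blast
qed

lemma matrix_diff_ldistrib: "(A::'x::comm_ring_1^'n^'m) ** (B - C) = A ** B - A ** C"
  by (simp add: vec_eq_iff matrix_matrix_mult_def algebra_simps sum_subtractf)

lemma matrix_diff_rdistrib: "((B::'x::comm_ring_1^'n^'m) - C) ** A = B ** A - C ** A"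
  by (simp add: vec_eq_iff matrix_matrix_mult_def algebra_simps sum_subtractf)

lemma matrix_mul_mat: "(A::'x::comm_ring_1^'n^'m) ** mat c = (\<chi> i j. A$i$j * c)"
proof -
  have "(\<Sum>l\<in>UNIV. A$i$l * (if l = k then c else 0)) = A$i$k * c" for i k
    by (simp add: if_distrib cong: if_cong)
  then show ?thesis by (simp add: vec_eq_iff matrix_matrix_mult_def mat_def)
qed

lemma mat_matrix_mul: "mat c ** (A::'x::comm_ring_1^'n^'m) = (\<chi> i j. c * A$i$j)"
proof -
  have "(\<Sum>l\<in>UNIV. (if i = l then c else 0) * A$l$k) = (\<Sum>l\<in>UNIV. if l = i then c * A$l$k else 0)" for i k
    by (rule sum.cong) auto
  then have "(\<Sum>l\<in>UNIV. (if i = l then c else 0) * A$l$k) = c * A$i$k" for i k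
    by simp
  then show ?thesis by (simp add: vec_eq_iff matrix_matrix_mult_def mat_def)
qed

lemma det_shift_unitary_conj:
  fixes U L :: "('n::finite, 'n) cmat"
  assumes "unitary U"
  shows "det (mat x - U ** L ** cadj U) = det (mat x - L)"
proof -
  have U: "U ** cadj U = mat 1" using assms by (simp add: unitary_def)
  have "U ** mat x ** cadj U = mat x ** (U ** cadj U)"
    by (simp add: matrix_mul_mat mat_matrix_mul matrix_mul_assoc mult.commute)
  then have "mat x - U ** L ** cadj U = U ** (mat x - L) ** cadj U"
    by (simp add: matrix_diff_ldistrib matrix_diff_rdistrib U)
  then have "det (mat x - U ** L ** cadj U) = det (mat x - L) * det (U ** cadj U)"
    by (simp add: det_mul)
  then show ?thesis by (simp add: U det_I)
qed

lemma charpoly_svals: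
  fixes A :: "('a::{finite,linorder}, 'b::{finite,linorder}) cmat"
  assumes sv: "is_svals A s"
  shows "det (mat x - A ** cadj A) = (\<Prod>l<CARD('a). x - complex_of_real ((s l)\<^sup>2))"
proof -
  obtain U :: "('a,'a) cmat" and V :: "('b,'b) cmat" where U: "unitary U" and V: "unitary V"
    and A: "A = U ** rect_diag s ** cadj V"
    using sv unfolding is_svals_def rect_diag_def by blast
  define L :: "('a,'a) cmat" where "L = rect_diag s ** cadj (rect_diag s :: ('a,'b) cmat)"
  have L: "L $ i $ i' = (if i = i' then complex_of_real ((s (tidx i))\<^sup>2) else 0)" for i i'
  proof -
    have "L $ i $ i' = (\<Sum>j\<in>UNIV. (if tidx i = tidx j then complex_of_real (s (tidx i)) else 0)
        * cnj (if tidx i' = tidx (j::'b) then complex_of_real (s (tidx i')) else 0))"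
      by (simp add: L_def rect_diag_def matrix_matrix_mult_def cadj_def)
    also have "\<dots> = (\<Sum>j\<in>UNIV. if tidx (j::'b) = tidx i then
        (if i = i' then complex_of_real ((s (tidx i))\<^sup>2) else 0) else 0)"
      by (rule sum.cong) (auto simp: power2_eq_square)
    moreover have "\<not> tidx i < CARD('b) \<Longrightarrow> s (tidx i) = 0"
      using sv tidx_less[of i] by (simp add: is_svals_def)
    ultimately show ?thesis by (auto simp: sum_tidx_eq)
  qed
  have "A ** cadj A = U ** rect_diag s ** (cadj V ** V) ** cadj (rect_diag s) ** cadj U"
    by (simp add: A cadj_mult matrix_mul_assoc)
  also have "\<dots> = U ** L ** cadj U"
    using V by (simp add: unitary_def L_def matrix_mul_assoc)
  finally have "det (mat x - A ** cadj A) = det (mat x - L)"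
    by (simp add: det_shift_unitary_conj[OF U])
  also have "\<dots> = (\<Prod>i\<in>UNIV. x - complex_of_real ((s (tidx (i::'a)))\<^sup>2))"
    by (subst det_diagonal) (simp_all add: mat_def L)
  also have "\<dots> = (\<Prod>l<CARD('a). x - complex_of_real ((s l)\<^sup>2))"
    by (rule prod.reindex_bij_betw[OF bij_tidx])
  finally show ?thesis .
qed

lemma nonincreasing_roots_unique:
  fixes a b :: "nat \<Rightarrow> real"
  assumes a: "\<And>i j. i \<le> j \<Longrightarrow> j < m \<Longrightarrow> a j \<le> a i"
    and b: "\<And>i j. i \<le> j \<Longrightarrow> j < m \<Longrightarrow> b j \<le> b i"
    and eq: "\<And>x::complex. (\<Prod>l<m. x - complex_of_real (a l)) = (\<Prod>l<m. x - complex_of_real (b l))"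
    and l: "l < m"
  shows "a l = b l"
proof (rule ccontr)
  define P where "P c = (\<Prod>l<m. [:- complex_of_real (c l), 1:])" for c
  have "poly (P a) = poly (P b)"
    by (rule ext) (simp add: P_def poly_prod eq[simplified] add.commute)
  then have P: "P a = P b" by (simp add: poly_eq_poly_eq_iff)
  assume "a l \<noteq> b l"
  then obtain j where j: "j < m" "a j \<noteq> b j" and before: "\<And>l. l < j \<Longrightarrow> a l = b l"
    using l exists_least_iff[of "\<lambda>j. j < m \<and> a j \<noteq> b j"] by (metis less_trans)
  \<comment> \<open>Cancel the common factors before j; then c j is a root of one side only.\<close>
  have False if c: "\<And>i j. i \<le> j \<Longrightarrow> j < m \<Longrightarrow> d j \<le> d i"
    and cd: "P c = P d" and before: "\<And>l. l < j \<Longrightarrow> c l = d l" and lt: "d j < c j" for c d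
  proof -
    define R where "R e = (\<Prod>l\<in>{j..<m}. [:- complex_of_real (e l), 1:])" for e
    have "{..<m} = {..<j} \<union> {j..<m}" "{..<j} \<inter> {j..<m} = {}" using j by auto
    then have "P e = (\<Prod>l<j. [:- complex_of_real (e l), 1:]) * R e" for e
      unfolding P_def R_def by (simp add: prod.union_disjoint)
    moreover have "(\<Prod>l<j. [:- complex_of_real (c l), 1:]) = (\<Prod>l<j. [:- complex_of_real (d l), 1:])"
      using before by simp
    moreover have "(\<Prod>l<j. [:- complex_of_real (d l), 1:]) \<noteq> 0" by (simp add: prod_zero_iff)
    ultimately have "R c = R d" using cd by simp
    moreover have "poly (R c) (complex_of_real (c j)) = 0"
      unfolding R_def poly_prod using j by (intro prod_zero) auto
    moreover have "poly (R d) (complex_of_real (c j)) \<noteq> 0"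
    proof -
      have "c j \<noteq> d l" if "l \<in> {j..<m}" for l using c[of j l] that lt by auto
      then show ?thesis by (simp add: R_def poly_prod prod_zero_iff)
    qed
    ultimately show False by simp
  qed
  then show False
    using j before a b P by (metis linorder_neqE_linordered_idom)
qed

lemma svals_unique:
  fixes A :: "('a::{finite,linorder}, 'b::{finite,linorder}) cmat"
  assumes s: "is_svals A s" and t: "is_svals A t"
  shows "s = t"
proof
  fix l
  show "s l = t l"
  proof (cases "l < CARD('a)")
    case True
    have "(s l)\<^sup>2 = (t l)\<^sup>2"
    proof (rule nonincreasing_roots_unique[OF _ _ _ True])
      show "(s j)\<^sup>2 \<le> (s i)\<^sup>2" "(t j)\<^sup>2 \<le> (t i)\<^sup>2" if "i \<le> j" for i j
        using s t that by (auto intro!: power_mono simp: is_svals_def)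
      show "(\<Prod>l<CARD('a). x - complex_of_real ((s l)\<^sup>2)) = (\<Prod>l<CARD('a). x - complex_of_real ((t l)\<^sup>2))" for x
        using charpoly_svals[OF s, of x] charpoly_svals[OF t, of x] by simp
    qed
    moreover have "0 \<le> s l" "0 \<le> t l" using s t by (auto simp: is_svals_def)
    ultimately show ?thesis by (simp add: power2_eq_iff_nonneg)
  next
    case False
    then show ?thesis using s t by (simp add: is_svals_def)
  qed
qed

lemma svals_nonneg: "0 \<le> svals A i"
proof -
  have "\<exists>!s. is_svals A s" using svals_exist svals_unique by blast
  then have "is_svals A (svals A)" unfolding svals_def by (rule theI')
  then show ?thesis by (simp add: is_svals_def)
qed

section \<open>Majorization and sufficient decrease\<close>

lemma tsigma_nonneg: "0 \<le> tsigma X k i"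
  unfolding tsigma_def by (rule svals_nonneg)

lemma lipschitz_gradient_upper_bound:
  fixes f :: "'v::real_inner \<Rightarrow> real" and gf :: "'v \<Rightarrow> 'v"
  assumes grad: "\<And>W. (f has_derivative (\<lambda>H. gf W \<bullet> H)) (at W)"
    and lip: "\<And>V W. norm (gf V - gf W) \<le> L * norm (V - W)"
  shows "f y \<le> f x + gf x \<bullet> (y - x) + L / 2 * (norm (y - x))\<^sup>2"
proof -
  define h where "h = y - x"
  define \<phi> where "\<phi> s = f (x + s *\<^sub>R h) - s * (gf x \<bullet> h) - L / 2 * s\<^sup>2 * (norm h)\<^sup>2" for s
  have line: "((\<lambda>s. f (x + s *\<^sub>R h)) has_real_derivative (gf (x + s *\<^sub>R h) \<bullet> h)) (at s)" for s
  proof -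
    have "((\<lambda>s. x + s *\<^sub>R h) has_derivative (\<lambda>d. d *\<^sub>R h)) (at s)"
      by (auto intro!: derivative_eq_intros)
    from has_derivative_compose[OF this grad]
    show ?thesis by (rule has_derivative_imp_has_field_derivative) simp
  qed
  have "\<phi> 1 \<le> \<phi> 0"
  proof (rule DERIV_nonpos_imp_nonincreasing[of 0 1])
    fix s :: real assume s: "0 \<le> s" "s \<le> 1"
    have "(gf (x + s *\<^sub>R h) - gf x) \<bullet> h \<le> norm (gf (x + s *\<^sub>R h) - gf x) * norm h"
      by (rule Cauchy_Schwarz_ineq2[THEN abs_le_D1])
    also have "\<dots> \<le> L * norm (s *\<^sub>R h) * norm h"
      using lip[of "x + s *\<^sub>R h" x] by (simp add: mult_right_mono)
    also have "\<dots> = L * s * (norm h)\<^sup>2" using s by (simp add: power2_eq_square)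
    finally have "gf (x + s *\<^sub>R h) \<bullet> h - gf x \<bullet> h - L * s * (norm h)\<^sup>2 \<le> 0"
      by (simp add: inner_diff_left)
    moreover have "(\<phi> has_real_derivative (gf (x + s *\<^sub>R h) \<bullet> h - gf x \<bullet> h - L * s * (norm h)\<^sup>2)) (at s)"
      unfolding \<phi>_def by (auto intro!: derivative_eq_intros line simp: power2_eq_square)
    ultimately show "\<exists>y. DERIV \<phi> s :> y \<and> y \<le> 0" by blast
  qed simp
  then show ?thesis by (simp add: \<phi>_def h_def)
qed

lemma lipschitz_gradient_lower_bound:
  fixes f :: "'v::real_inner \<Rightarrow> real" and gf :: "'v \<Rightarrow> 'v"
  assumes grad: "\<And>W. (f has_derivative (\<lambda>H. gf W \<bullet> H)) (at W)"
    and lip: "\<And>V W. norm (gf V - gf W) \<le> L * norm (V - W)"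
  shows "f x + gf x \<bullet> (y - x) - L / 2 * (norm (y - x))\<^sup>2 \<le> f y"
proof -
  have "((\<lambda>V. - f V) has_derivative (\<lambda>H. - gf W \<bullet> H)) (at W)" for W
    using has_derivative_minus[OF grad[of W]] by simp
  moreover have "norm (- gf V - - gf W) \<le> L * norm (V - W)" for V W
    using lip[of V W] by (simp add: norm_minus_commute)
  ultimately have "- f y \<le> - f x + - gf x \<bullet> (y - x) + L / 2 * (norm (y - x))\<^sup>2"
    by (rule lipschitz_gradient_upper_bound)
  then show ?thesis by simp
qed

lemma convex_on_right_tangent:
  fixes g :: "real \<Rightarrow> real"
  assumes conv: "convex_on {c..x} g" and cx: "c < x"
    and deriv: "(g has_real_derivative g') (at c within {c..})"
  shows "g' * (x - c) \<le> g x - g c"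
proof -
  have "at c within {c<..} \<noteq> bot" by (subst at_within_eq_bot_iff) auto
  moreover have "((\<lambda>y. (g y - g c) / (y - c)) \<longlongrightarrow> g') (at c within {c<..})"
    using deriv unfolding has_field_derivative_iff by (rule tendsto_mono[rotated]) (rule at_le, auto)
  moreover have "eventually (\<lambda>y. (g y - g c) / (y - c) \<le> (g x - g c) / (x - c)) (at_right c)"
    using eventually_at_right_real[OF cx]
  proof eventually_elim
    fix y assume y: "y \<in> {c<..<x}"
    have "g y \<le> (g x - g c) / (x - c) * (y - c) + g c"
      using y cx by (intro convex_onD_Icc'[OF conv]) auto
    then show "(g y - g c) / (y - c) \<le> (g x - g c) / (x - c)"
      using y by (simp add: field_split_simps)
  qed
  ultimately have "g' \<le> (g x - g c) / (x - c)" by (simp add: tendsto_upperbound)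
  then show ?thesis using cx by (simp add: field_simps)
qed

lemma concave_on_le_tangent:
  fixes \<rho> \<rho>' :: "real \<Rightarrow> real"
  assumes conc: "concave_on {0..} \<rho>"
    and deriv: "\<And>t. 0 \<le> t \<Longrightarrow> (\<rho> has_real_derivative \<rho>' t) (at t within {0..})"
    and x: "0 \<le> x" and y: "0 \<le> y"
  shows "\<rho> y \<le> \<rho> x + \<rho>' x * (y - x)"
proof -
  have conv: "convex_on {0..} (\<lambda>t. - \<rho> t)" using conc by (simp add: concave_on_def)
  have d: "((\<lambda>t. - \<rho> t) has_real_derivative - \<rho>' x) (at x within {0..})"
    using deriv[OF x] by (auto intro!: derivative_eq_intros)
  consider "x < y" | "y < x" | "x = y" by linarith
  then show ?thesis
  proof cases
    case 1
    have "convex_on {x..y} (\<lambda>t. - \<rho> t)" by (rule convex_on_subset[OF conv]) (use x in auto)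
    moreover have "((\<lambda>t. - \<rho> t) has_real_derivative - \<rho>' x) (at x within {x..})"
      by (rule has_field_derivative_subset[OF d]) (use x in auto)
    ultimately show ?thesis using convex_on_right_tangent[OF _ 1] by fastforce
  next
    case 2
    then have "- \<rho>' x * (y - x) \<le> - \<rho> y - - \<rho> x"
      using y by (intro convex_on_imp_above_tangent[OF conv _ _ _ d]) auto
    then show ?thesis by simp
  qed simp
qed

lemma nested_concave_le_tangent:
  fixes \<rho> \<rho>' :: "real \<Rightarrow> real" and \<sigma> \<tau> :: "nat \<Rightarrow> real"
  assumes tangent: "\<And>x y. 0 \<le> x \<Longrightarrow> 0 \<le> y \<Longrightarrow> \<rho> y \<le> \<rho> x + \<rho>' x * (y - x)"
    and nonneg: "\<And>t. 0 \<le> t \<Longrightarrow> 0 \<le> \<rho> t" and deriv_nonneg: "\<And>t. 0 \<le> t \<Longrightarrow> 0 \<le> \<rho>' t"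
    and \<sigma>: "\<And>i. 0 \<le> \<sigma> i" and \<tau>: "\<And>i. 0 \<le> \<tau> i"
  shows "\<rho> (\<Sum>i<r. \<rho> (\<rho> (\<tau> i))) - \<rho> (\<Sum>i<r. \<rho> (\<rho> (\<sigma> i)))
    \<le> (\<Sum>i<r. \<rho>' (\<Sum>i<r. \<rho> (\<rho> (\<sigma> i))) * \<rho>' (\<rho> (\<sigma> i)) * (\<rho> (\<tau> i) - \<rho> (\<sigma> i)))"
proof -
  let ?S = "\<lambda>\<sigma>. \<Sum>i<r. \<rho> (\<rho> (\<sigma> i))"
  have S: "0 \<le> ?S \<sigma>" "0 \<le> ?S \<tau>" using \<sigma> \<tau> nonneg by (simp_all add: sum_nonneg)
  have "?S \<tau> - ?S \<sigma> \<le> (\<Sum>i<r. \<rho>' (\<rho> (\<sigma> i)) * (\<rho> (\<tau> i) - \<rho> (\<sigma> i)))"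
    unfolding sum_subtractf[symmetric]
  proof (intro sum_mono)
    fix i
    show "\<rho> (\<rho> (\<tau> i)) - \<rho> (\<rho> (\<sigma> i)) \<le> \<rho>' (\<rho> (\<sigma> i)) * (\<rho> (\<tau> i) - \<rho> (\<sigma> i))"
      using tangent[OF nonneg[OF \<sigma>[of i]] nonneg[OF \<tau>[of i]]] by simp
  qed
  then have "\<rho>' (?S \<sigma>) * (?S \<tau> - ?S \<sigma>)
      \<le> \<rho>' (?S \<sigma>) * (\<Sum>i<r. \<rho>' (\<rho> (\<sigma> i)) * (\<rho> (\<tau> i) - \<rho> (\<sigma> i)))"
    using deriv_nonneg[OF S(1)] by (rule mult_left_mono)
  moreover have "\<rho> (?S \<tau>) - \<rho> (?S \<sigma>) \<le> \<rho>' (?S \<sigma>) * (?S \<tau> - ?S \<sigma>)"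
    using tangent[OF S] by simp
  ultimately show ?thesis by (simp add: sum_distrib_left mult.assoc)
qed

lemma objF_le_majorant:
  fixes \<rho> \<rho>' :: "real \<Rightarrow> real" and f :: "('a::{finite,linorder}, 'b::{finite,linorder}, 'c::{finite,linorder}) tensor \<Rightarrow> real"
    and V W :: "('a, 'b, 'c) tensor"
  assumes tangent: "\<And>x y. 0 \<le> x \<Longrightarrow> 0 \<le> y \<Longrightarrow> \<rho> y \<le> \<rho> x + \<rho>' x * (y - x)"
    and nonneg: "\<And>t. 0 \<le> t \<Longrightarrow> 0 \<le> \<rho> t" and deriv_nonneg: "\<And>t. 0 \<le> t \<Longrightarrow> 0 \<le> \<rho>' t"
    and lam: "0 \<le> lam"
  defines "\<alpha> \<equiv> \<lambda>k. \<rho>' (\<Sum>i<min CARD('a) CARD('b). \<rho> (\<rho> (tsigma W k i)))"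
    and "\<beta> \<equiv> \<lambda>k i. \<rho>' (\<rho> (tsigma W k i))"
  shows "objF \<rho> lam f V - objF \<rho> lam f W \<le> lam * (wfun \<rho> \<alpha> \<beta> V - wfun \<rho> \<alpha> \<beta> W) + f V - f W"
proof -
  let ?r = "min CARD('a) CARD('b)"
  have "\<rho> (\<Sum>i<?r. \<rho> (\<rho> (tsigma V k i))) - \<rho> (\<Sum>i<?r. \<rho> (\<rho> (tsigma W k i)))
      \<le> (\<Sum>i<?r. \<alpha> k * \<beta> k i * \<rho> (tsigma V k i)) - (\<Sum>i<?r. \<alpha> k * \<beta> k i * \<rho> (tsigma W k i))" for k
    using nested_concave_le_tangent[where \<sigma>="tsigma W k" and \<tau>="tsigma V k" and r="?r",
        OF tangent nonneg deriv_nonneg tsigma_nonneg tsigma_nonneg]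
    by (simp add: \<alpha>_def \<beta>_def sum_subtractf right_diff_distrib)
  then have "(\<Sum>k\<in>UNIV. \<rho> (\<Sum>i<?r. \<rho> (\<rho> (tsigma V k i)))) - (\<Sum>k\<in>UNIV. \<rho> (\<Sum>i<?r. \<rho> (\<rho> (tsigma W k i))))
      \<le> wfun \<rho> \<alpha> \<beta> V - wfun \<rho> \<alpha> \<beta> W"
    unfolding wfun_def sum_subtractf[symmetric] by (intro sum_mono) simp
  from mult_left_mono[OF this lam] show ?thesis by (simp add: objF_def right_diff_distrib)
qed

lemma inertial_step_decrease:
  fixes F R f :: "'v::real_inner \<Rightarrow> real" and gf :: "'v \<Rightarrow> 'v"
  assumes grad: "\<And>W. (f has_derivative (\<lambda>H. gf W \<bullet> H)) (at W)"
    and lip: "\<And>V W. norm (gf V - gf W) \<le> L * norm (V - W)"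
    and maj: "F x2 - F x1 \<le> R x2 - R x1 + f x2 - f x1"
    and opt: "R x2 + gf z \<bullet> (x2 - y) + \<mu> / 2 * (norm (x2 - y))\<^sup>2
      \<le> R x1 + gf z \<bullet> (x1 - y) + \<mu> / 2 * (norm (x1 - y))\<^sup>2"
    and y: "y = x1 + \<theta>1 *\<^sub>R (x1 - x0)" and z: "z = x1 + \<theta>2 *\<^sub>R (x1 - x0)"
    and L: "0 < L" and \<theta>1: "0 \<le> \<theta>1" "0 \<le> \<theta>1'" and \<theta>2: "0 \<le> \<theta>2" "\<theta>2 \<le> 1 / 2"
    and \<epsilon>: "0 < \<epsilon>" and den: "0 < 1 - \<theta>1 - \<theta>1' - \<epsilon>" and \<mu>': "\<mu>' \<le> \<mu>"
    and bound1: "\<theta>2 * L \<le> \<mu> * \<theta>1" and bound2: "(1 - \<theta>2) * L \<le> \<mu> * (1 - \<theta>1 - \<theta>1' - \<epsilon>)"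
  shows "F x2 + \<mu>' * \<theta>1' / 2 * (norm (x2 - x1))\<^sup>2 - (F x1 + \<mu> * \<theta>1 / 2 * (norm (x1 - x0))\<^sup>2)
    \<le> - (\<epsilon> * L / 2) * (norm (x2 - x1))\<^sup>2"
proof -
  define D E where "D = x2 - x1" and "E = x1 - x0"
  define a b p where "a = (norm D)\<^sup>2" and "b = (norm E)\<^sup>2" and "p = D \<bullet> E"
  have sq: "(norm (D - s *\<^sub>R E))\<^sup>2 = a - 2 * s * p + s\<^sup>2 * b" for s
    unfolding a_def b_def p_def power2_norm_eq_inner
    by (simp add: inner_diff_left inner_diff_right inner_commute power2_eq_square algebra_simps)
  have "x2 - y = D - \<theta>1 *\<^sub>R E" "x1 - y = - (\<theta>1 *\<^sub>R E)" "x2 - z = D - \<theta>2 *\<^sub>R E" "x1 - z = - (\<theta>2 *\<^sub>R E)"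
    by (simp_all add: D_def E_def y z)
  note diffs = this
  have "R x2 - R x1 \<le> - (gf z \<bullet> D) - \<mu> / 2 * a + \<mu> * \<theta>1 * p"
    using opt unfolding diffs sq by (simp add: inner_diff_right b_def power_mult_distrib algebra_simps)
  moreover have "f x2 - f x1 \<le> gf z \<bullet> D + L / 2 * a - L * \<theta>2 * p + L * \<theta>2\<^sup>2 * b"
    using lipschitz_gradient_upper_bound[OF grad lip, of x2 z] lipschitz_gradient_lower_bound[OF grad lip, of z x1]
    unfolding diffs sq by (simp add: inner_diff_right b_def power_mult_distrib algebra_simps)
  ultimately have basic: "F x2 - F x1 \<le> L / 2 * a - \<mu> / 2 * a + \<mu> * \<theta>1 * p - L * \<theta>2 * p + L * \<theta>2\<^sup>2 * b"
    using maj by linarith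
  \<comment> \<open>Absorb the cross term by \<open>2 p \<le> a + b\<close>, which is where \<open>\<theta>2 * L \<le> \<mu> * \<theta>1\<close> is needed.\<close>
  have "0 \<le> (D - E) \<bullet> (D - E)" by simp
  then have "2 * p \<le> a + b"
    by (simp add: a_def b_def p_def power2_norm_eq_inner inner_diff_left inner_diff_right inner_commute)
  then have "(\<mu> * \<theta>1 - L * \<theta>2) * (2 * p) \<le> (\<mu> * \<theta>1 - L * \<theta>2) * (a + b)"
    using bound1 by (intro mult_left_mono) (simp_all add: mult.commute)
  moreover have "L * \<theta>2\<^sup>2 * b \<le> L * \<theta>2 / 2 * b"
  proof -
    have "\<theta>2\<^sup>2 \<le> \<theta>2 / 2" using mult_left_mono[OF \<theta>2(2) \<theta>2(1)] by (simp add: power2_eq_square)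
    then have "L * \<theta>2\<^sup>2 \<le> L * (\<theta>2 / 2)" using L by (simp add: mult_left_mono)
    moreover have "0 \<le> b" by (simp add: b_def)
    ultimately show ?thesis using mult_right_mono by fastforce
  qed
  moreover have "L \<le> \<mu>"
  proof -
    have "0 < (1 - \<theta>2) * L" using \<theta>2 L by simp
    then have "0 < \<mu>" using bound2 den by (metis mult_nonpos_nonneg not_le order.strict_trans2 less_le)
    have "L \<le> \<mu> * (1 - \<theta>1' - \<epsilon>)" using bound1 bound2 by (simp add: algebra_simps)
    also have "\<dots> \<le> \<mu>" using \<open>0 < \<mu>\<close> \<theta>1 \<epsilon> by (simp add: algebra_simps)
    finally show ?thesis .
  qed
  then have "\<epsilon> * L + \<mu>' * \<theta>1' \<le> \<mu> * (\<epsilon> + \<theta>1')"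
    using \<epsilon> mult_right_mono[OF \<mu>' \<theta>1(2)] by (simp add: distrib_left add_mono)
  then have "\<epsilon> * L * a + \<mu>' * \<theta>1' * a \<le> \<mu> * (\<epsilon> + \<theta>1') * a"
    using mult_right_mono[OF _ zero_le_power2[of "norm D"]] unfolding a_def by (metis distrib_right)
  moreover have "(1 - \<theta>2) * L * a \<le> \<mu> * (1 - \<theta>1 - \<theta>1' - \<epsilon>) * a"
    using bound2 by (simp add: a_def mult_right_mono)
  ultimately show ?thesis
    using basic unfolding a_def[symmetric] b_def[symmetric] D_def[symmetric] E_def[symmetric]
    by (simp add: algebra_simps)
qed

lemma objF_inertial_step_decrease:
  fixes \<rho> \<rho>' :: "real \<Rightarrow> real"
    and f :: "('a::{finite,linorder}, 'b::{finite,linorder}, 'c::{finite,linorder}) tensor \<Rightarrow> real"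
    and gf :: "('a, 'b, 'c) tensor \<Rightarrow> ('a, 'b, 'c) tensor" and x0 x1 x2 :: "('a, 'b, 'c) tensor"
    and \<theta>1 \<theta>2 :: real
  assumes conc: "concave_on {0..} \<rho>"
    and deriv: "\<And>t. 0 \<le> t \<Longrightarrow> (\<rho> has_real_derivative \<rho>' t) (at t within {0..})"
    and nonneg: "\<And>t. 0 \<le> t \<Longrightarrow> 0 \<le> \<rho> t" and pos: "\<And>t. 0 \<le> t \<Longrightarrow> 0 < \<rho>' t"
    and grad: "\<And>W. (f has_derivative (\<lambda>H. gf W \<bullet> H)) (at W)"
    and lip: "\<And>V W. norm (gf V - gf W) \<le> L * norm (V - W)"
    and lam: "0 < lam"
  defines "\<alpha> \<equiv> \<lambda>k. \<rho>' (\<Sum>i<min CARD('a) CARD('b). \<rho> (\<rho> (tsigma x1 k i)))"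
    and "\<beta> \<equiv> \<lambda>k i. \<rho>' (\<rho> (tsigma x1 k i))"
    and "y \<equiv> x1 + \<theta>1 *\<^sub>R (x1 - x0)" and "z \<equiv> x1 + \<theta>2 *\<^sub>R (x1 - x0)"
  assumes opt: "lam * wfun \<rho> \<alpha> \<beta> x2 + gf z \<bullet> (x2 - y) + \<mu> / 2 * (norm (x2 - y))\<^sup>2
      \<le> lam * wfun \<rho> \<alpha> \<beta> x1 + gf z \<bullet> (x1 - y) + \<mu> / 2 * (norm (x1 - y))\<^sup>2"
    and L: "0 < L" and \<theta>1: "0 \<le> \<theta>1" "0 \<le> \<theta>1'" and \<theta>2: "0 \<le> \<theta>2" "\<theta>2 \<le> 1 / 2"
    and \<epsilon>: "0 < \<epsilon>" and den: "0 < 1 - \<theta>1 - \<theta>1' - \<epsilon>" and \<mu>': "\<mu>' \<le> \<mu>"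
    and bound1: "\<theta>2 * L \<le> \<mu> * \<theta>1" and bound2: "(1 - \<theta>2) * L / (1 - \<theta>1 - \<theta>1' - \<epsilon>) \<le> \<mu>"
  shows "objF \<rho> lam f x2 + \<mu>' * \<theta>1' / 2 * (norm (x2 - x1))\<^sup>2 - (objF \<rho> lam f x1 + \<mu> * \<theta>1 / 2 * (norm (x1 - x0))\<^sup>2)
    \<le> - (\<epsilon> * L / 2) * (norm (x2 - x1))\<^sup>2"
proof (rule inertial_step_decrease[where R = "\<lambda>V. lam * wfun \<rho> \<alpha> \<beta> V" and F = "objF \<rho> lam f",
      OF grad lip _ opt y_def[THEN meta_eq_to_obj_eq] z_def[THEN meta_eq_to_obj_eq] L \<theta>1 \<theta>2 \<epsilon> den \<mu>' bound1])
  show "objF \<rho> lam f x2 - objF \<rho> lam f x1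
      \<le> lam * wfun \<rho> \<alpha> \<beta> x2 - lam * wfun \<rho> \<alpha> \<beta> x1 + f x2 - f x1"
    using objF_le_majorant[where f = f and V = x2 and W = x1,
        OF concave_on_le_tangent[OF conc deriv] nonneg less_imp_le[OF pos] less_imp_le[OF lam]]
    unfolding \<alpha>_def \<beta>_def by (simp add: right_diff_distrib)
  show "(1 - \<theta>2) * L \<le> \<mu> * (1 - \<theta>1 - \<theta>1' - \<epsilon>)"
    using bound2 den by (simp add: pos_divide_le_eq)
qed

lemma sufficient_decrease_imp_steps_tendsto_zero:
  fixes H :: "nat \<Rightarrow> real" and X :: "nat \<Rightarrow> 'v::real_normed_vector"
  assumes decrease: "\<And>t. H (Suc t) + c * (norm (X (Suc t) - X t))\<^sup>2 \<le> H t"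
    and bdd: "\<And>t. B \<le> H t" and c: "0 < c"
  shows "(\<lambda>t. X t - X (Suc t)) \<longlonglongrightarrow> 0"
proof -
  define d where "d t = (norm (X (Suc t) - X t))\<^sup>2" for t
  have "summable d"
  proof (rule bounded_imp_summable)
    fix n
    have "H (Suc n) + c * (\<Sum>t\<le>n. d t) \<le> H 0"
    proof (induction n)
      case (Suc n)
      then show ?case using decrease[of "Suc n"] by (simp add: d_def algebra_simps)
    qed (use decrease[of 0] in \<open>simp add: d_def\<close>)
    then have "c * (\<Sum>t\<le>n. d t) \<le> H 0 - B" using bdd[of "Suc n"] by linarith
    then show "(\<Sum>t\<le>n. d t) \<le> (H 0 - B) / c" using c by (simp add: pos_le_divide_eq mult.commute)
  qed (simp add: d_def)
  then have "d \<longlonglongrightarrow> 0" by (rule summable_LIMSEQ_zero)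
  then have "(\<lambda>t. norm (X t - X (Suc t))) \<longlonglongrightarrow> 0"
    using tendsto_real_sqrt by (fastforce simp: d_def norm_minus_commute)
  then show ?thesis by (simp add: tendsto_norm_zero_iff)
qed

theorem lemmaA3:
  fixes \<rho> \<rho>' :: "real \<Rightarrow> real" and Lg :: real
    and f :: "('a::{finite,linorder}, 'b::{finite,linorder}, 'c::{finite,linorder}) tensor \<Rightarrow> real"
    and gf :: "('a, 'b, 'c) tensor \<Rightarrow> ('a, 'b, 'c) tensor" and Lf :: real
    and lam \<epsilon> :: real and \<theta>1 \<theta>2 \<mu> :: "nat \<Rightarrow> real"
    and X :: "nat \<Rightarrow> ('a, 'b, 'c) tensor"
  assumes A1_nonneg: "\<And>t. 0 \<le> t \<Longrightarrow> 0 \<le> \<rho> t"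
    and A1_deriv: "\<And>t. 0 \<le> t \<Longrightarrow> (\<rho> has_real_derivative \<rho>' t) (at t within {0..})"
    and A1_concave: "concave_on {0..} \<rho>"
    and A1_lip: "\<And>s t. 0 \<le> s \<Longrightarrow> 0 \<le> t \<Longrightarrow> \<bar>\<rho>' s - \<rho>' t\<bar> \<le> Lg * \<bar>s - t\<bar>"
    and A1_pos: "\<And>t. 0 \<le> t \<Longrightarrow> 0 < \<rho>' t"
    and A2_nonneg: "\<And>W. 0 \<le> f W"
    and A2_grad: "\<And>W. (f has_derivative (\<lambda>H. gf W \<bullet> H)) (at W)"
    and A2_lip: "\<And>V W. norm (gf V - gf W) \<le> Lf * norm (V - W)"
    and A2_Lf: "0 < Lf"
    and lam: "0 < lam"
    and A3_coercive: "filterlim (objF \<rho> lam f) at_top at_infinity"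
    and A3_bdd: "\<exists>c. \<forall>W. c \<le> objF \<rho> lam f W"
    and iter: "\<And>t W.
      (let \<alpha> = (\<lambda>k. \<rho>' (\<Sum>i<min (card (UNIV::'a set)) (card (UNIV::'b set)). \<rho> (\<rho> (tsigma (X t) k i))));
           \<beta> = (\<lambda>k i. \<rho>' (\<rho> (tsigma (X t) k i)));
           Y = X t + \<theta>1 t *\<^sub>R (X t - X (t - 1));
           Z = X t + \<theta>2 t *\<^sub>R (X t - X (t - 1));
           \<Phi> = (\<lambda>V. lam * wfun \<rho> \<alpha> \<beta> V + gf Z \<bullet> (V - Y) + \<mu> t / 2 * (norm (V - Y))\<^sup>2)
       in \<Phi> (X (Suc t)) \<le> \<Phi> W)"
    and A4_eps: "0 < \<epsilon>" "\<epsilon> < 1"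
    and A4_theta1: "\<And>t. 0 \<le> \<theta>1 t \<and> \<theta>1 t < (1 - \<epsilon>) / 2"
    and A4_theta2: "\<And>t. 0 \<le> \<theta>2 t \<and> \<theta>2 t \<le> 1 / 2"
    and A4_mu_mono: "\<And>t. \<mu> (Suc t) \<le> \<mu> t"
    and A4_mu_bound0: "\<And>t. \<mu> t \<le> \<mu> 0"
    and A4_mu_bound1: "\<And>t. \<theta>2 t * Lf \<le> \<mu> t * \<theta>1 t"
    and A4_mu_bound2: "\<And>t. (1 - \<theta>2 t) * Lf / (1 - \<theta>1 t - \<theta>1 (Suc t) - \<epsilon>) \<le> \<mu> t"
  defines "H \<equiv> (\<lambda>t. objF \<rho> lam f (X t) + (\<mu> t * \<theta>1 t / 2) * (norm (X t - X (t - 1)))\<^sup>2)"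
  shows "(\<forall>t. H (Suc t) - H t \<le> - (\<epsilon> * Lf / 2) * (norm (X (Suc t) - X t))\<^sup>2)
         \<and> (\<forall>t. H (Suc t) \<le> H t)
         \<and> ((\<lambda>t. X t - X (Suc t)) \<longlonglongrightarrow> 0)"

proof -
  have \<theta>1: "0 \<le> \<theta>1 t" "\<theta>1 t < (1 - \<epsilon>) / 2" for t using A4_theta1 by auto
  have \<theta>2: "0 \<le> \<theta>2 t" "\<theta>2 t \<le> 1 / 2" for t using A4_theta2 by auto
  have den: "0 < 1 - \<theta>1 t - \<theta>1 (Suc t) - \<epsilon>" for t using \<theta>1(2)[of t] \<theta>1(2)[of "Suc t"] by simp
  have step: "H (Suc t) - H t \<le> - (\<epsilon> * Lf / 2) * (norm (X (Suc t) - X t))\<^sup>2" for t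
    using objF_inertial_step_decrease[OF A1_concave A1_deriv A1_nonneg A1_pos A2_grad A2_lip lam
        iter[of t "X t", unfolded Let_def] A2_Lf \<theta>1(1) \<theta>1(1) \<theta>2 A4_eps(1) den A4_mu_mono
        A4_mu_bound1 A4_mu_bound2]
    unfolding H_def by simp
  have c: "0 < \<epsilon> * Lf / 2" using A4_eps A2_Lf by simp
  obtain B where B: "\<And>W. B \<le> objF \<rho> lam f W" using A3_bdd by blast
  have "B \<le> H t" for t
  proof -
    have "0 < (1 - \<theta>2 t) * Lf / (1 - \<theta>1 t - \<theta>1 (Suc t) - \<epsilon>)"
      using den[of t] \<theta>2(2)[of t] A2_Lf by simp
    then have "0 \<le> \<mu> t" using A4_mu_bound2[of t] by linarith
    then have "0 \<le> \<mu> t * \<theta>1 t / 2 * (norm (X t - X (t - 1)))\<^sup>2" using \<theta>1(1)[of t] by simp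
    then show ?thesis using B[of "X t"] unfolding H_def by linarith
  qed
  moreover have "H (Suc t) + \<epsilon> * Lf / 2 * (norm (X (Suc t) - X t))\<^sup>2 \<le> H t" for t
    using step[of t] by simp
  ultimately have "(\<lambda>t. X t - X (Suc t)) \<longlonglongrightarrow> 0"
    using sufficient_decrease_imp_steps_tendsto_zero c by blast
  moreover have "H (Suc t) \<le> H t" for t
    using step[of t] mult_nonneg_nonneg[OF less_imp_le[OF c] zero_le_power2[of "norm (X (Suc t) - X t)"]]
    by linarith
  ultimately show ?thesis using step by blast
qed

end
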